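(* Let $A$ be a finite alphabet, let $\sigma : A^\star \to A^\star$ be a morphism and let $w\in A^\star$ be such that for every $a\in A$ there exists $m\in\mathbb{N}$ such that the letter $a$ occurs in $\sigma^m(w)$. Then $$|\sigma^n(w)| \asymp \sum_{a\in A} |\sigma^n(a)|$$ as $n\to\infty$.
   Context: $A^\star$ is the free monoid of finite words over $A$; a morphism satisfies $\sigma(uv)=\sigma(u)\sigma(v)$; $\sigma^n$ is the $n$-th iterate; $|u|$ is the length of $u$. For $f,g:\mathbb{N}\to\mathbb{C}$, $f(n) \preceq g(n)$ means there is a real $\lambda>0$ such that the set $\{n\in\mathbb{N} : |f(n)| > \lambda |g(n)|\}$ is finite, and $f(n)\asymp g(n)$ means both $f(n)\preceq g(n)$ and $g(n)\preceq f(n)$. *)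

theory Defs
  imports Complex_Main
begin

definition morph :: "('a \<Rightarrow> 'a list) \<Rightarrow> 'a list \<Rightarrow> 'a list" where
  "morph s u = concat (map s u)"

definition bigO_le :: "(nat \<Rightarrow> complex) \<Rightarrow> (nat \<Rightarrow> complex) \<Rightarrow> bool" where
  "bigO_le f g \<longleftrightarrow> (\<exists>c::real. c > 0 \<and> finite {n. cmod (f n) > c * cmod (g n)})"

definition asymp_eq :: "(nat \<Rightarrow> complex) \<Rightarrow> (nat \<Rightarrow> complex) \<Rightarrow> bool" where
  "asymp_eq f g \<longleftrightarrow> bigO_le f g \<and> bigO_le g f"

end

theory Submission
  imports Defs
begin

text \<open>Every letter of \<open>w\<close> is a letter of \<open>A\<close>, so \<open>|\<sigma>\<^sup>n(w)| \<le> |w| \<Sum>\<^sub>a |\<sigma>\<^sup>n(a)|\<close>.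
  Conversely, if \<open>K\<close> bounds \<open>|\<sigma>(a)|\<close> on \<open>A\<close> then \<open>|\<sigma>\<^sup>m(u)| \<le> K\<^sup>m |u|\<close>; if \<open>a\<close> occurs in
  \<open>\<sigma>\<^sup>m(w)\<close>, then \<open>|\<sigma>\<^sup>n(a)| \<le> |\<sigma>\<^sup>n(\<sigma>\<^sup>m(w))| = |\<sigma>\<^sup>m(\<sigma>\<^sup>n(w))| \<le> K\<^sup>m |\<sigma>\<^sup>n(w)|\<close>, and summing
  over the finitely many letters gives the other bound with a constant independent of \<open>n\<close>.\<close>

lemma morph_append: "morph s (u @ v) = morph s u @ morph s v"
  by (simp add: morph_def)

lemma funpow_morph_append: "(morph s ^^ n) (u @ v) = (morph s ^^ n) u @ (morph s ^^ n) v"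
  by (induction n) (simp_all add: morph_append)

lemma funpow_morph_Nil: "(morph s ^^ n) [] = []"
  by (induction n) (simp_all add: morph_def)

lemma length_funpow_morph: "length ((morph s ^^ n) u) = (\<Sum>x\<leftarrow>u. length ((morph s ^^ n) [x]))"
proof (induction u)
  case Nil
  then show ?case by (simp add: funpow_morph_Nil)
next
  case (Cons x u)
  then show ?case using funpow_morph_append[where u="[x]" and v=u] by simp
qed

lemma length_funpow_morph_letter_le:
  assumes "a \<in> set u"
  shows "length ((morph s ^^ n) [a]) \<le> length ((morph s ^^ n) u)"
proof -
  obtain xs ys where "u = xs @ [a] @ ys" using split_list[OF assms] by auto
  then show ?thesis by (simp only: funpow_morph_append length_append)
qed

lemma set_funpow_morph_subset:
  assumes "\<And>a. a \<in> A \<Longrightarrow> set (s a) \<subseteq> A" and "set u \<subseteq> A"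
  shows "set ((morph s ^^ n) u) \<subseteq> A"
  using assms(2) by (induction n) (auto simp: morph_def dest!: assms(1))

lemma length_morph_le:
  assumes "\<And>a. a \<in> set u \<Longrightarrow> length (s a) \<le> K"
  shows "length (morph s u) \<le> K * length u"
  using assms by (induction u) (fastforce simp: morph_def)+

lemma length_funpow_morph_le_pow:
  assumes "\<And>a. a \<in> A \<Longrightarrow> set (s a) \<subseteq> A" and "\<And>a. a \<in> A \<Longrightarrow> length (s a) \<le> K"
    and "set u \<subseteq> A"
  shows "length ((morph s ^^ m) u) \<le> K ^ m * length u"
proof (induction m)
  case 0
  then show ?case by simp
next
  case (Suc m)
  have "set ((morph s ^^ m) u) \<subseteq> A"
    using set_funpow_morph_subset[OF assms(1,3)] .
  then have "length ((morph s ^^ Suc m) u) \<le> K * length ((morph s ^^ m) u)"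
    using length_morph_le[of "(morph s ^^ m) u" s K] assms(2) by auto
  also have "\<dots> \<le> K * (K ^ m * length u)"
    using Suc by simp
  finally show ?case by (simp add: mult.assoc)
qed

lemma length_funpow_morph_letter_le_pow:
  assumes "\<And>a. a \<in> A \<Longrightarrow> set (s a) \<subseteq> A" and "\<And>a. a \<in> A \<Longrightarrow> length (s a) \<le> K"
    and "set w \<subseteq> A" and "a \<in> set ((morph s ^^ m) w)"
  shows "length ((morph s ^^ n) [a]) \<le> K ^ m * length ((morph s ^^ n) w)"
proof -
  have "length ((morph s ^^ n) [a]) \<le> length ((morph s ^^ n) ((morph s ^^ m) w))"
    using length_funpow_morph_letter_le[OF assms(4)] .
  also have "\<dots> = length ((morph s ^^ (n + m)) w)"
    by (simp add: funpow_add)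
  also have "\<dots> = length ((morph s ^^ m) ((morph s ^^ n) w))"
    by (simp add: funpow_add add.commute[of n m])
  also have "\<dots> \<le> K ^ m * length ((morph s ^^ n) w)"
    using length_funpow_morph_le_pow[OF assms(1,2) set_funpow_morph_subset[OF assms(1,3)]] .
  finally show ?thesis .
qed

lemma bigO_le_of_nat:
  assumes "\<And>n. f n \<le> C * g n"
  shows "bigO_le (\<lambda>n. of_nat (f n)) (\<lambda>n. of_nat (g n))"
  unfolding bigO_le_def
proof (intro exI conjI)
  show "real (Suc C) > 0" by simp
  have "f n \<le> Suc C * g n" for n
    using assms[of n] le_trans mult_le_mono1 by fastforce
  then have "real (f n) \<le> real (Suc C) * real (g n)" for n
    by (metis of_nat_le_iff of_nat_mult)
  then have "{n. cmod (of_nat (f n) :: complex) > real (Suc C) * cmod (of_nat (g n) :: complex)} = {}"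
    by (auto simp del: of_nat_Suc simp: not_less)
  then show "finite {n. cmod (of_nat (f n) :: complex) > real (Suc C) * cmod (of_nat (g n) :: complex)}"
    by simp
qed

theorem lemma2:
  fixes A :: "'a set" and \<sigma> :: "'a \<Rightarrow> 'a list" and w :: "'a list"
  assumes "finite A"
    and "\<And>a. a \<in> A \<Longrightarrow> set (\<sigma> a) \<subseteq> A"
    and "set w \<subseteq> A"
    and "\<And>a. a \<in> A \<Longrightarrow> \<exists>m::nat. a \<in> set ((morph \<sigma> ^^ m) w)"
  shows "asymp_eq (\<lambda>n. of_nat (length ((morph \<sigma> ^^ n) w)))
                  (\<lambda>n. of_nat (\<Sum>a\<in>A. length ((morph \<sigma> ^^ n) [a])))"
proof -
  define S where "S n = (\<Sum>a\<in>A. length ((morph \<sigma> ^^ n) [a]))" for n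
  have upper: "length ((morph \<sigma> ^^ n) w) \<le> length w * S n" for n
  proof -
    have "length ((morph \<sigma> ^^ n) w) \<le> (\<Sum>x\<leftarrow>w. S n)"
      unfolding length_funpow_morph[where u=w] S_def
      using assms(1,3) by (intro sum_list_mono member_le_sum) auto
    then show ?thesis by (simp add: sum_list_triv)
  qed
  obtain m where m: "\<And>a. a \<in> A \<Longrightarrow> a \<in> set ((morph \<sigma> ^^ m a) w)"
    using assms(4) by metis
  define K where "K = (\<Sum>a\<in>A. length (\<sigma> a))"
  have K: "length (\<sigma> a) \<le> K" if "a \<in> A" for a
    unfolding K_def using assms(1) that by (intro member_le_sum) auto
  have lower: "S n \<le> (\<Sum>a\<in>A. K ^ m a) * length ((morph \<sigma> ^^ n) w)" for n
    unfolding S_def sum_distrib_right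
    by (intro sum_mono length_funpow_morph_letter_le_pow[OF assms(2) K assms(3) m])
  show ?thesis
    unfolding asymp_eq_def S_def[symmetric]
    by (intro conjI bigO_le_of_nat) (rule upper lower)+
qed

end
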